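(* Let $n \ge 2$ and let $n_1, m_1$ be nonzero integers, and let $\mathcal{P} = \mathcal{P}_n(n_1;m_1)$. Then: (i) there exist integers $n_1', m_1'$ with $1 \le n_1', m_1' \le \lceil n/2 \rceil$ and $\mathcal{P} \simeq_Q \mathcal{P}_n(n_1';m_1')$; (ii) if $n_1 = 1$ or $m_1 = 1$, then $\mathcal{P}_n(n_1;m_1) \simeq_Q \mathcal{P}_n^{\mathrm{std}}$.
   Context: For integers $n_1,m_1$, $\mathcal{P}_n(n_1;m_1) = \langle x, y \mid x^n y^{-2},\ x^{n_1} y x^{m_1} y^{-1} x^{1-n_1} y x^{1-m_1} y^{-1} \rangle$, and $\mathcal{P}_n^{\mathrm{std}} = \langle x,y \mid x^ny^{-2}, xyxy^{-1}\rangle$. Two finite presentations on the same generators are $Q$-equivalent ($\simeq_Q$) if related by a finite sequence of the moves: replace a relator $r_i$ by $r_ir_j$ ($j\neq i$); replace $r_i$ by $r_i^{-1}$; replace $r_i$ by $wr_iw^{-1}$ for some $w$ in the free group on the generators. *)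

theory Defs
  imports Complex_Main
begin

datatype gen = X | Y

text \<open>A letter is (inverted?, generator); (False, g) is g, (True, g) is g^-1.\<close>
type_synonym letter = "bool \<times> gen"
type_synonym word = "letter list"

fun red :: "word \<Rightarrow> word" where
  "red [] = []"
| "red (a # w) = (case red w of
      [] \<Rightarrow> [a]
    | b # w' \<Rightarrow> (if fst b \<noteq> fst a \<and> snd b = snd a then w' else a # b # w'))"

definition fmul :: "word \<Rightarrow> word \<Rightarrow> word" where
  "fmul u v = red (u @ v)"

definition finv :: "word \<Rightarrow> word" where
  "finv w = rev (map (\<lambda>(b, g). (\<not> b, g)) w)"

definition gpow :: "gen \<Rightarrow> int \<Rightarrow> word" where
  "gpow g k = (if 0 \<le> k then replicate (nat k) (False, g) else replicate (nat (- k)) (True, g))"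

text \<open>Relators as (reduced) elements of the free group on x, y; a presentation on
  the generators x, y is the list of its relators.\<close>
definition P_n :: "nat \<Rightarrow> int \<Rightarrow> int \<Rightarrow> word list" where
  "P_n n n1 m1 =
    [ red (gpow X (int n) @ gpow Y (-2)),
      red (gpow X n1 @ gpow Y 1 @ gpow X m1 @ gpow Y (-1) @ gpow X (1 - n1)
           @ gpow Y 1 @ gpow X (1 - m1) @ gpow Y (-1)) ]"

definition P_std :: "nat \<Rightarrow> word list" where
  "P_std n =
    [ red (gpow X (int n) @ gpow Y (-2)),
      red (gpow X 1 @ gpow Y 1 @ gpow X 1 @ gpow Y (-1)) ]"

definition qmove :: "word list \<Rightarrow> word list \<Rightarrow> bool" where
  "qmove rs rs' \<longleftrightarrow>
     (\<exists>i j. i < length rs \<and> j < length rs \<and> i \<noteq> j \<and> rs' = rs[i := fmul (rs ! i) (rs ! j)])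
   \<or> (\<exists>i. i < length rs \<and> rs' = rs[i := finv (rs ! i)])
   \<or> (\<exists>i w. i < length rs \<and> rs' = rs[i := fmul (fmul w (rs ! i)) (finv w)])"

definition Q_equiv :: "word list \<Rightarrow> word list \<Rightarrow> bool" (infix "\<simeq>\<^sub>Q" 50) where
  "Q_equiv rs rs' \<longleftrightarrow> qmove\<^sup>*\<^sup>* rs rs'"

end

(*
  Q-moves can multiply the second relator s of a presentation [r, s] by conjugates of r^(+-1)
  and can conjugate s; hence [r, s] and [r, s'] are Q-equivalent as soon as a conjugate of s
  agrees with s' modulo the normal closure of r. Modulo the normal closure of x^n y^-2, x^n
  equals y^2 and is therefore central. Centrality of x^n allows shifting n1 and m1 by multiples
  of n, and conjugating by x^(1-m1) y, using twice that y^2 is central, turns the relator for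
  (n1, m1) into the one for (1 - m1, n1). Up to the order of the parameters, iterating this
  rotation replaces either parameter k by 1 - k; since the residues of k and 1 - k in {1..n}
  add up to n + 1, one of them is at most ceil(n/2). For n1 = 1 the second relator reduces
  freely to x y x y^-1, and (n1, 1) rotates to (1, 1 - n1).
*)
theory Submission
  imports Defs
begin

definition letter_inv :: "letter \<Rightarrow> letter" where
  "letter_inv l = (\<not> fst l, snd l)"

definition cancels :: "letter \<Rightarrow> letter \<Rightarrow> bool" where
  "cancels a b \<longleftrightarrow> fst b \<noteq> fst a \<and> snd b = snd a"

definition cons_red :: "letter \<Rightarrow> word \<Rightarrow> word" where
  "cons_red a w = (case w of [] \<Rightarrow> [a] | b # w' \<Rightarrow> if cancels a b then w' else a # b # w')"

definition reduced :: "word \<Rightarrow> bool" where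
  "reduced w \<longleftrightarrow> successively (\<lambda>a b. \<not> cancels a b) w"

lemma red_Cons: "red (a # w) = cons_red a (red w)"
  by (simp add: cons_red_def cancels_def split: list.split)

declare red.simps(2)[simp del]

lemma reduced_cons_red: "reduced w \<Longrightarrow> reduced (cons_red a w)"
  by (cases w) (auto simp: cons_red_def reduced_def successively_Cons split: list.splits)

lemma reduced_red: "reduced (red w)"
  by (induction w) (simp_all add: red_Cons reduced_cons_red, simp add: reduced_def)

lemma red_reduced: "reduced w \<Longrightarrow> red w = w"
proof (induction w)
  case (Cons a w)
  then have "reduced w" by (auto simp: reduced_def successively_Cons)
  with Cons show ?case
    by (cases w) (auto simp: red_Cons cons_red_def reduced_def)
qed simp

lemma reduced_fmul: "reduced (fmul u v)"
  by (simp add: fmul_def reduced_red)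

lemma red_red [simp]: "red (red w) = red w"
  by (simp add: red_reduced reduced_red)

lemma cons_red_cancel: "reduced w \<Longrightarrow> cancels a b \<Longrightarrow> cons_red a (cons_red b w) = w"
  by (cases w) (auto simp: cons_red_def cancels_def reduced_def successively_Cons prod_eq_iff
      split: list.splits)

lemma red_append_right: "red (u @ v) = red (u @ red v)"
  by (induction u) (simp_all add: red_Cons)

lemma cons_red_red_append: "reduced w \<Longrightarrow> cons_red a (red (w @ v)) = red (cons_red a w @ v)"
proof (cases w)
  case (Cons b w')
  assume "reduced w"
  show ?thesis
  proof (cases "cancels a b")
    case True
    then have "cons_red a (cons_red b (red (w' @ v))) = red (w' @ v)"
      by (intro cons_red_cancel reduced_red)
    with Cons True show ?thesis by (simp add: cons_red_def red_Cons)
  qed (use Cons in \<open>simp add: cons_red_def red_Cons\<close>)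
qed (simp add: cons_red_def red_Cons)

lemma red_append_left: "red (u @ v) = red (red u @ v)"
  by (induction u) (simp_all add: red_Cons cons_red_red_append reduced_red)

lemma red_append_cong: "red u = red u' \<Longrightarrow> red v = red v' \<Longrightarrow> red (u @ v) = red (u' @ v')"
  by (metis red_append_left red_append_right)

lemma finv_Nil [simp]: "finv [] = []"
  by (simp add: finv_def)

lemma finv_Cons: "finv (a # u) = finv u @ [letter_inv a]"
  by (simp add: finv_def letter_inv_def case_prod_beta)

lemma finv_append [simp]: "finv (u @ v) = finv v @ finv u"
  by (simp add: finv_def)

lemma finv_finv [simp]: "finv (finv u) = u"
  by (simp add: finv_def rev_map comp_def case_prod_beta)

lemma reduced_finv: "reduced w \<Longrightarrow> reduced (finv w)"
  by (auto simp: reduced_def finv_def successively_map cancels_def case_prod_beta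
      elim!: successively_mono)

lemma red_append_finv [simp]: "red (u @ finv u) = []"
proof (induction u)
  case (Cons a u)
  have "red ((u @ finv u) @ [letter_inv a]) = [letter_inv a]"
    by (subst red_append_left) (simp add: Cons red_Cons cons_red_def)
  then show ?case
    by (simp add: finv_Cons red_Cons cons_red_def cancels_def letter_inv_def)
qed simp

lemma red_finv_append [simp]: "red (finv u @ u) = []"
  using red_append_finv[of "finv u"] by simp

lemma red_finv_cong:
  assumes "red u = red v"
  shows "red (finv u) = red (finv v)"
proof -
  have "red (finv u) = red ((finv u @ v) @ finv v)"
    by (simp add: red_append_right[of "finv u"] red_append_left[of "finv u @ v"])
  also have "\<dots> = red (finv v)"
    using assms by (metis red_append_left red_append_right red_finv_append append_Nil)
  finally show ?thesis .
qed

lemma red_replicate_cancel: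
  assumes "cancels l m"
  shows "red (replicate p l @ replicate q m) =
    red (if q \<le> p then replicate (p - q) l else replicate (q - p) m)"
proof (induction p arbitrary: q)
  case (Suc p)
  show ?case
  proof (cases q)
    case (Suc q')
    have "red (replicate (Suc p) l @ replicate q m) = red (replicate p l @ l # m # replicate q' m)"
      using Suc by (simp add: replicate_app_Cons_same)
    also have "\<dots> = red (replicate p l @ replicate q' m)"
      using assms by (subst (1 2) red_append_right) (simp add: red_Cons cons_red_cancel reduced_red)
    finally show ?thesis using Suc.IH[of q'] Suc by simp
  qed simp
qed simp

lemma red_gpow_add: "red (gpow g a @ gpow g b) = red (gpow g (a + b))"
proof -
  have c: "cancels (False, g) (True, g)" "cancels (True, g) (False, g)"
    by (simp_all add: cancels_def)
  consider "0 \<le> a" "0 \<le> b" | "a < 0" "b < 0" | "0 \<le> a" "b < 0" | "a < 0" "0 \<le> b"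
    by linarith
  then show ?thesis
    by cases (auto simp: gpow_def replicate_add[symmetric] nat_add_distrib red_replicate_cancel[OF c(1)]
        red_replicate_cancel[OF c(2)] nat_diff_distrib' intro!: arg_cong[where f = red])
qed

section \<open>The free group on x and y\<close>

quotient_type fg = word / "\<lambda>u v. red u = red v"
  by (rule equivpI) (auto simp: reflp_def symp_def transp_def)

instantiation fg :: group_add
begin

lift_definition zero_fg :: fg is "[]" .

lift_definition plus_fg :: "fg \<Rightarrow> fg \<Rightarrow> fg" is "(@)"
  by (rule red_append_cong)

lift_definition uminus_fg :: "fg \<Rightarrow> fg" is finv
  by (rule red_finv_cong)

lift_definition minus_fg :: "fg \<Rightarrow> fg \<Rightarrow> fg" is "\<lambda>u v. u @ finv v"
  by (intro red_append_cong red_finv_cong)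

instance
  by standard (transfer; simp)+

end

lemma abs_fg_eq_iff: "abs_fg u = abs_fg v \<longleftrightarrow> red u = red v"
  by (simp add: fg.abs_eq_iff)

lemma reduced_eqI: "reduced u \<Longrightarrow> reduced v \<Longrightarrow> abs_fg u = abs_fg v \<Longrightarrow> u = v"
  by (metis abs_fg_eq_iff red_reduced)

lemma abs_fg_append: "abs_fg (u @ v) = abs_fg u + abs_fg v"
  by (simp add: plus_fg.abs_eq)

lemma abs_fg_finv: "abs_fg (finv u) = - abs_fg u"
  by (simp add: uminus_fg.abs_eq)

lemma abs_fg_red [simp]: "abs_fg (red u) = abs_fg u"
  by (simp add: abs_fg_eq_iff)

lemma abs_fg_fmul: "abs_fg (fmul u v) = abs_fg u + abs_fg v"
  by (simp add: fmul_def abs_fg_append)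

lemma abs_fg_rep_fg [simp]: "abs_fg (rep_fg x) = x"
  by (rule Quotient3_abs_rep[OF Quotient3_fg])

definition gx :: "int \<Rightarrow> fg" where
  "gx k = abs_fg (gpow X k)"

definition gy :: "int \<Rightarrow> fg" where
  "gy k = abs_fg (gpow Y k)"

lemma abs_fg_gpow_add: "abs_fg (gpow g (a + b)) = abs_fg (gpow g a) + abs_fg (gpow g b)"
  by (simp add: abs_fg_append[symmetric] abs_fg_eq_iff red_gpow_add)

lemma gx_add: "gx (a + b) = gx a + gx b"
  by (simp add: gx_def abs_fg_gpow_add)

lemma gy_add: "gy (a + b) = gy a + gy b"
  by (simp add: gy_def abs_fg_gpow_add)

lemma gx_zero [simp]: "gx 0 = 0" and gy_zero [simp]: "gy 0 = 0"
  by (simp_all add: gx_def gy_def gpow_def zero_fg_def)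

lemma gx_minus: "gx (- a) = - gx a"
  by (metis add.right_inverse gx_add gx_zero minus_unique)

lemma gy_minus: "gy (- a) = - gy a"
  by (metis add.right_inverse gy_add gy_zero minus_unique)

lemma gx_diff: "gx (a - b) = gx a - gx b"
  by (metis diff_conv_add_uminus gx_add gx_minus)

lemma gx_commute: "gx a + gx b = gx b + gx a"
  by (metis add.commute gx_add)

lemma gy_commute: "gy a + gy b = gy b + gy a"
  by (metis add.commute gy_add)

lemma fg_subgroup_induct:
  assumes "P 0" and "\<And>u v. P u \<Longrightarrow> P v \<Longrightarrow> P (u + v)" and "\<And>u. P u \<Longrightarrow> P (- u)"
    and "P (gx 1)" and "P (gy 1)"
  shows "P u"
proof -
  have letter: "P (abs_fg [l])" for l
  proof -
    obtain b g where l: "l = (b, g)" by fastforce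
    have "abs_fg [(True, g)] = - abs_fg [(False, g)]"
      by (simp add: abs_fg_finv[symmetric] finv_def)
    then show ?thesis
      using assms(3-5) l by (cases b; cases g) (auto simp: gx_def gy_def gpow_def)
  qed
  have "P (abs_fg w)" for w
  proof (induction w)
    case Nil
    then show ?case using assms(1) by (simp add: zero_fg_def)
  next
    case (Cons l w)
    then show ?case
      using assms(2)[OF letter] abs_fg_append[of "[l]" w] by simp
  qed
  then show ?thesis
    by (metis abs_fg_rep_fg)
qed

section \<open>Congruence modulo the normal closure of one element\<close>

lemmas group_add_normalize = diff_conv_add_uminus add.assoc minus_add

inductive_set normal_closure :: "'a::group_add \<Rightarrow> 'a set" for r :: 'a where
  zero: "0 \<in> normal_closure r"
| add_conj: "u \<in> normal_closure r \<Longrightarrow> u + (w + r - w) \<in> normal_closure r"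
| diff_conj: "u \<in> normal_closure r \<Longrightarrow> u - (w + r - w) \<in> normal_closure r"

lemma normal_closure_add:
  "v \<in> normal_closure r \<Longrightarrow> u \<in> normal_closure r \<Longrightarrow> u + v \<in> normal_closure r"
proof (induction v rule: normal_closure.induct)
  case (add_conj v w)
  then show ?case using normal_closure.add_conj[of "u + v" r w] by (simp add: add.assoc)
next
  case (diff_conj v w)
  then show ?case
    using normal_closure.diff_conj[of "u + v" r w] by (simp add: add_diff_eq)
qed simp

lemma normal_closure_conj_mem: "w + r - w \<in> normal_closure r"
  using normal_closure.add_conj[OF normal_closure.zero, where w = w] by simp

lemma normal_closure_minus_conj_mem: "- (w + r - w) \<in> normal_closure r"
  using normal_closure.diff_conj[OF normal_closure.zero, where w = w] by simp

lemma normal_closure_minus: "u \<in> normal_closure r \<Longrightarrow> - u \<in> normal_closure r"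
proof (induction u rule: normal_closure.induct)
  case (add_conj u w)
  then show ?case
    using normal_closure_add[OF add_conj.IH normal_closure_minus_conj_mem] by (simp add: minus_add)
next
  case (diff_conj u w)
  then show ?case
    using normal_closure_add[OF diff_conj.IH normal_closure_conj_mem]
    by (simp add: group_add_normalize del: add_uminus_conv_diff)
qed (simp add: normal_closure.zero)

lemma normal_closure_conj: "u \<in> normal_closure r \<Longrightarrow> p + u - p \<in> normal_closure r"
proof (induction u rule: normal_closure.induct)
  case (add_conj u w)
  have "p + (u + (w + r - w)) - p = (p + u - p) + ((p + w) + r - (p + w))"
    by (simp add: group_add_normalize del: add_uminus_conv_diff)
  then show ?case using normal_closure_add[OF normal_closure_conj_mem add_conj.IH] by simp
next
  case (diff_conj u w)
  have "p + (u - (w + r - w)) - p = (p + u - p) + - ((p + w) + r - (p + w))"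
    by (simp add: group_add_normalize del: add_uminus_conv_diff)
  then show ?case using normal_closure_add[OF normal_closure_minus_conj_mem diff_conj.IH] by simp
qed (simp add: normal_closure.zero)

definition nc_cong :: "'a::group_add \<Rightarrow> 'a \<Rightarrow> 'a \<Rightarrow> bool" where
  "nc_cong r u v \<longleftrightarrow> - u + v \<in> normal_closure r"

lemma nc_cong_refl [simp]: "nc_cong r u u"
  by (simp add: nc_cong_def normal_closure.zero)

lemma nc_cong_sym: "nc_cong r u v \<Longrightarrow> nc_cong r v u"
  unfolding nc_cong_def by (drule normal_closure_minus) (simp add: minus_add)

lemma nc_cong_trans [trans]: "nc_cong r u v \<Longrightarrow> nc_cong r v w \<Longrightarrow> nc_cong r u w"
  unfolding nc_cong_def by (drule (1) normal_closure_add) (simp add: add.assoc)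

lemma nc_cong_add:
  assumes "nc_cong r u u'" and "nc_cong r v v'"
  shows "nc_cong r (u + v) (u' + v')"
proof -
  have "- (u + v) + (u' + v') = (- v + (- u + u') - - v) + (- v + v')"
    by (simp add: group_add_normalize del: add_uminus_conv_diff)
  with assms show ?thesis
    unfolding nc_cong_def by (metis normal_closure_add normal_closure_conj)
qed

lemma nc_cong_context: "nc_cong r u v \<Longrightarrow> nc_cong r (p + u + q) (p + v + q)"
  by (simp add: nc_cong_add)

lemma nc_cong_relator: "nc_cong r r 0"
  using normal_closure_minus_conj_mem[of 0 r] by (simp add: nc_cong_def)

lemma nc_cong_commute_add:
  assumes "nc_cong r (c + u) (u + c)" and "nc_cong r (c + v) (v + c)"
  shows "nc_cong r (c + (u + v)) ((u + v) + c)"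
proof -
  have "nc_cong r (c + u + v) (u + c + v)"
    using assms(1) by (simp add: nc_cong_add)
  also have "nc_cong r (u + c + v) (u + (v + c))"
    using assms(2) by (simp add: nc_cong_add add.assoc)
  finally show ?thesis by (simp add: add.assoc)
qed

lemma nc_cong_commute_minus:
  assumes "nc_cong r (c + u) (u + c)"
  shows "nc_cong r (c + - u) (- u + c)"
proof -
  have "nc_cong r (- u + (c + u) + - u) (- u + (u + c) + - u)"
    by (rule nc_cong_add[OF nc_cong_add[OF nc_cong_refl assms] nc_cong_refl])
  moreover have "- u + (c + u) + - u = - u + c" and "- u + (u + c) + - u = c + - u"
    by (simp_all add: group_add_normalize del: add_uminus_conv_diff)
  ultimately show ?thesis
    by (simp add: nc_cong_sym)
qed

lemma nc_cong_periodic: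
  fixes f :: "int \<Rightarrow> 'a::group_add"
  assumes "\<And>k. nc_cong r (f (k + d)) (f k)"
  shows "nc_cong r (f (k + m * d)) (f k)"
proof (induction m rule: int_induct[where k = 0])
  case (step1 i)
  have "nc_cong r (f (k + i * d + d)) (f (k + i * d))"
    by (rule assms)
  with step1.IH show ?case
    by (simp add: distrib_right add.assoc nc_cong_trans)
next
  case (step2 i)
  have "nc_cong r (f (k + (i - 1) * d + d)) (f (k + (i - 1) * d))"
    by (rule assms)
  then have "nc_cong r (f (k + (i - 1) * d)) (f (k + i * d))"
    by (simp add: algebra_simps nc_cong_sym)
  from this step2.IH show ?case
    by (rule nc_cong_trans)
qed simp

lemma Q_equiv_refl: "P \<simeq>\<^sub>Q P"
  by (simp add: Q_equiv_def)

lemma Q_equiv_trans [trans]: "P \<simeq>\<^sub>Q Q \<Longrightarrow> Q \<simeq>\<^sub>Q R \<Longrightarrow> P \<simeq>\<^sub>Q R"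
  unfolding Q_equiv_def by (rule rtranclp_trans)

lemma Q_equiv_mult_second: "[r, s] \<simeq>\<^sub>Q [r, fmul s r]"
  unfolding Q_equiv_def qmove_def
  by (rule r_into_rtranclp, rule disjI1, rule exI[of _ 1], rule exI[of _ 0]) simp

lemma Q_equiv_inv_first: "[r, s] \<simeq>\<^sub>Q [finv r, s]"
  unfolding Q_equiv_def qmove_def
  by (rule r_into_rtranclp, rule disjI2, rule disjI1, rule exI[of _ 0]) simp

lemma Q_equiv_conj_first: "[r, s] \<simeq>\<^sub>Q [fmul (fmul w r) (finv w), s]"
  unfolding Q_equiv_def qmove_def
  by (rule r_into_rtranclp, rule disjI2, rule disjI2, rule exI[of _ 0], rule exI[of _ w]) simp

lemma Q_equiv_conj_second: "[r, s] \<simeq>\<^sub>Q [r, fmul (fmul w s) (finv w)]"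
  unfolding Q_equiv_def qmove_def
  by (rule r_into_rtranclp, rule disjI2, rule disjI2, rule exI[of _ 1], rule exI[of _ w]) simp

lemma Q_equiv_mult_conj_second:
  assumes "reduced r"
  shows "[r, s] \<simeq>\<^sub>Q [r, fmul s (fmul (fmul w r) (finv w))]"
proof -
  define c where "c = fmul (fmul w r) (finv w)"
  have "[r, s] \<simeq>\<^sub>Q [c, s]"
    unfolding c_def by (rule Q_equiv_conj_first)
  also have "\<dots> \<simeq>\<^sub>Q [c, fmul s c]"
    by (rule Q_equiv_mult_second)
  also have "\<dots> \<simeq>\<^sub>Q [fmul (fmul (finv w) c) (finv (finv w)), fmul s c]"
    by (rule Q_equiv_conj_first)
  also have "fmul (fmul (finv w) c) (finv (finv w)) = r"
    using assms by (intro reduced_eqI reduced_fmul)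
      (simp_all add: c_def abs_fg_fmul abs_fg_finv add.assoc)
  finally show ?thesis
    by (simp add: c_def)
qed

lemma Q_equiv_normal_closure:
  assumes "reduced r" and "u \<in> normal_closure (abs_fg r)" and "abs_fg s' = abs_fg s + u"
  shows "[r, red s] \<simeq>\<^sub>Q [r, red s']"
  using assms(2,3)
proof (induction u arbitrary: s' rule: normal_closure.induct)
  case zero
  then show ?case by (simp add: abs_fg_eq_iff Q_equiv_refl)
next
  case (add_conj u w)
  define s1 where "s1 = rep_fg (abs_fg s + u)"
  define c where "c = fmul (fmul (rep_fg w) r) (finv (rep_fg w))"
  have "[r, red s] \<simeq>\<^sub>Q [r, red s1]"
    by (rule add_conj.IH) (simp add: s1_def)
  also have "\<dots> \<simeq>\<^sub>Q [r, fmul (red s1) c]"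
    unfolding c_def by (rule Q_equiv_mult_conj_second[OF assms(1)])
  also have "fmul (red s1) c = red s'"
    using add_conj.prems by (intro reduced_eqI reduced_fmul reduced_red)
      (simp add: s1_def c_def abs_fg_fmul abs_fg_finv add.assoc)
  finally show ?case .
next
  case (diff_conj u w)
  define s1 where "s1 = rep_fg (abs_fg s + u)"
  define c where "c = fmul (fmul (rep_fg w) (finv r)) (finv (rep_fg w))"
  have "[r, red s] \<simeq>\<^sub>Q [r, red s1]"
    by (rule diff_conj.IH) (simp add: s1_def)
  also have "\<dots> \<simeq>\<^sub>Q [finv r, red s1]"
    by (rule Q_equiv_inv_first)
  also have "\<dots> \<simeq>\<^sub>Q [finv r, fmul (red s1) c]"
    unfolding c_def by (rule Q_equiv_mult_conj_second[OF reduced_finv[OF assms(1)]])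
  also have "\<dots> \<simeq>\<^sub>Q [finv (finv r), fmul (red s1) c]"
    by (rule Q_equiv_inv_first)
  also have "fmul (red s1) c = red s'"
    using diff_conj.prems by (intro reduced_eqI reduced_fmul reduced_red)
      (simp add: s1_def c_def abs_fg_fmul abs_fg_finv group_add_normalize del: add_uminus_conv_diff)
  finally show ?case by simp
qed

lemma Q_equiv_second_relator:
  assumes "reduced r" and "nc_cong (abs_fg r) (w + abs_fg s - w) (abs_fg s')"
  shows "[r, red s] \<simeq>\<^sub>Q [r, red s']"
proof -
  define s0 where "s0 = fmul (fmul (rep_fg w) (red s)) (finv (rep_fg w))"
  have "[r, red s] \<simeq>\<^sub>Q [r, s0]"
    unfolding s0_def by (rule Q_equiv_conj_second)
  also have "s0 = red s0"
    by (simp add: s0_def fmul_def)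
  also have "[r, red s0] \<simeq>\<^sub>Q [r, red s']"
  proof (rule Q_equiv_normal_closure[OF assms(1)])
    show "- abs_fg s0 + abs_fg s' \<in> normal_closure (abs_fg r)"
      using assms(2)
      by (simp add: nc_cong_def s0_def abs_fg_fmul abs_fg_finv group_add_normalize del: add_uminus_conv_diff)
  qed (simp add: add.assoc[symmetric])
  finally show ?thesis .
qed

section \<open>Centrality of x^n modulo the first relator\<close>

lemma fg_nc_cong_central:
  assumes "nc_cong r (c + gx 1) (gx 1 + c)" and "nc_cong r (c + gy 1) (gy 1 + c)"
  shows "nc_cong r (c + u) (u + c)"
  by (induction u rule: fg_subgroup_induct)
    (use assms nc_cong_commute_add nc_cong_commute_minus in auto)

definition power_relator :: "nat \<Rightarrow> word" where
  "power_relator n = red (gpow X (int n) @ gpow Y (-2))"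

lemma abs_fg_power_relator: "abs_fg (power_relator n) = gx (int n) - gy 2"
  by (simp add: power_relator_def abs_fg_append gx_def[symmetric] gy_def[symmetric] gy_minus)

lemma reduced_power_relator: "reduced (power_relator n)"
  by (simp add: power_relator_def reduced_red)

abbreviation nc_cong_n :: "nat \<Rightarrow> fg \<Rightarrow> fg \<Rightarrow> bool" where
  "nc_cong_n n \<equiv> nc_cong (abs_fg (power_relator n))"

lemma gx_n_nc_cong_gy_2: "nc_cong_n n (gx (int n)) (gy 2)"
  using nc_cong_add[OF nc_cong_relator nc_cong_refl, of "abs_fg (power_relator n)" "gy 2"]
  by (simp add: abs_fg_power_relator)

lemma gx_n_central: "nc_cong_n n (gx (int n) + u) (u + gx (int n))"
proof (rule fg_nc_cong_central)
  show "nc_cong_n n (gx (int n) + gx 1) (gx 1 + gx (int n))"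
    by (simp add: gx_commute)
  have "nc_cong_n n (gx (int n) + gy 1) (gy 2 + gy 1)"
    by (simp add: nc_cong_add gx_n_nc_cong_gy_2)
  also have "gy 2 + gy 1 = gy 1 + gy 2"
    by (rule gy_commute)
  also have "nc_cong_n n \<dots> (gy 1 + gx (int n))"
    by (simp add: nc_cong_add nc_cong_sym gx_n_nc_cong_gy_2)
  finally show "nc_cong_n n (gx (int n) + gy 1) (gy 1 + gx (int n))" .
qed

lemma gy_2_central: "nc_cong_n n (gy 2 + u) (u + gy 2)"
proof -
  have "nc_cong_n n (gy 2 + u) (gx (int n) + u)"
    by (simp add: nc_cong_add nc_cong_sym gx_n_nc_cong_gy_2)
  also have "nc_cong_n n \<dots> (u + gx (int n))"
    by (rule gx_n_central)
  also have "nc_cong_n n \<dots> (u + gy 2)"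
    by (simp add: nc_cong_add gx_n_nc_cong_gy_2)
  finally show ?thesis .
qed

lemma minus_gy_2_central: "nc_cong_n n (u + - gy 2) (- gy 2 + u)"
  by (rule nc_cong_commute_minus) (rule nc_cong_sym[OF gy_2_central])

definition second_relator_word :: "int \<Rightarrow> int \<Rightarrow> word" where
  "second_relator_word a b = gpow X a @ gpow Y 1 @ gpow X b @ gpow Y (-1) @ gpow X (1 - a)
     @ gpow Y 1 @ gpow X (1 - b) @ gpow Y (-1)"

definition second_relator :: "int \<Rightarrow> int \<Rightarrow> fg" where
  "second_relator a b = gx a + gy 1 + gx b - gy 1 + gx (1 - a) + gy 1 + gx (1 - b) - gy 1"

lemma abs_fg_second_relator_word: "abs_fg (second_relator_word a b) = second_relator a b"
  unfolding second_relator_word_def second_relator_def abs_fg_append gx_def[symmetric]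
    gy_def[symmetric] gy_minus
  by (simp only: group_add_normalize)

lemma P_n_eq: "P_n n a b = [power_relator n, red (second_relator_word a b)]"
  by (simp add: P_n_def power_relator_def second_relator_word_def)

lemma P_n_Q_equivI:
  assumes "nc_cong_n n (w + second_relator a b - w) (second_relator a' b')"
  shows "P_n n a b \<simeq>\<^sub>Q P_n n a' b'"
  unfolding P_n_eq
  by (rule Q_equiv_second_relator[OF reduced_power_relator, where w = w])
    (simp only: abs_fg_second_relator_word assms)

lemma second_relator_shift_fst: "nc_cong_n n (second_relator (a + int n) b) (second_relator a b)"
proof -
  let ?N = "gx (int n)"
  define U where "U = gy 1 + gx b - gy 1 + gx (1 - a)"
  define V where "V = gy 1 + gx (1 - b) - gy 1"
  have shift: "gx (1 - (a + int n)) = gx (1 - a) - ?N"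
    using gx_diff[of "1 - a" "int n"] by (simp add: diff_diff_eq)
  have "second_relator (a + int n) b = gx a + (?N + U) + (- ?N + V)"
    unfolding second_relator_def U_def V_def gx_add shift
    by (simp only: group_add_normalize)
  also have "nc_cong_n n \<dots> (gx a + (U + ?N) + (- ?N + V))"
    by (rule nc_cong_context[OF gx_n_central])
  also have "gx a + (U + ?N) + (- ?N + V) = second_relator a b"
    unfolding second_relator_def U_def V_def
    by (simp only: group_add_normalize add_minus_cancel)
  finally show ?thesis .
qed

lemma second_relator_shift_snd: "nc_cong_n n (second_relator a (b + int n)) (second_relator a b)"
proof -
  let ?N = "gx (int n)"
  define U where "U = - gy 1 + gx (1 - a) + gy 1 + gx (1 - b)"
  have shift: "gx (1 - (b + int n)) = gx (1 - b) - ?N"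
    using gx_diff[of "1 - b" "int n"] by (simp add: diff_diff_eq)
  have "second_relator a (b + int n) = gx a + gy 1 + gx b + (?N + U) + (- ?N - gy 1)"
    unfolding second_relator_def U_def gx_add shift
    by (simp only: group_add_normalize)
  also have "nc_cong_n n \<dots> (gx a + gy 1 + gx b + (U + ?N) + (- ?N - gy 1))"
    by (rule nc_cong_context[OF gx_n_central])
  also have "gx a + gy 1 + gx b + (U + ?N) + (- ?N - gy 1) = second_relator a b"
    unfolding second_relator_def U_def
    by (simp only: group_add_normalize add_minus_cancel)
  finally show ?thesis .
qed

lemma second_relator_rotate:
  "nc_cong_n n ((gx (1 - b) + gy 1) + second_relator a b - (gx (1 - b) + gy 1))
     (second_relator (1 - b) a)"
proof -
  let ?y = "gy 1" and ?S = "gy 2"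
  define A where "A = gx (1 - b) + ?y + gx a + ?y + gx b - ?y + gx (1 - a) + ?y"
  define P where "P = gx (1 - b) + ?y + gx a - ?y"
  define Q where "Q = - ?y + gx (1 - a) - ?y"
  have S: "?S = ?y + ?y"
    using gy_add[of 1 1] by simp
  have "1 - (1 - b) = b"
    by simp
  have "(gx (1 - b) + ?y) + second_relator a b - (gx (1 - b) + ?y)
      = A + (gx (1 - b) + - ?S) + - gx (1 - b)"
    unfolding second_relator_def A_def S by (simp only: group_add_normalize)
  also have "nc_cong_n n \<dots> (A + (- ?S + gx (1 - b)) + - gx (1 - b))"
    by (rule nc_cong_context[OF minus_gy_2_central])
  also have "A + (- ?S + gx (1 - b)) + - gx (1 - b) = P + (?S + gx b) + Q"
    unfolding A_def P_def Q_def S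
    by (simp only: group_add_normalize add_minus_cancel minus_add_cancel add.right_inverse add_0_right)
  also have "nc_cong_n n \<dots> (P + (gx b + ?S) + Q)"
    by (rule nc_cong_context[OF gy_2_central])
  also have "P + (gx b + ?S) + Q = second_relator (1 - b) a"
    unfolding second_relator_def P_def Q_def S \<open>1 - (1 - b) = b\<close>
    by (simp only: group_add_normalize add_minus_cancel minus_add_cancel)
  finally show ?thesis .
qed

lemma P_n_Q_equiv_rotate: "P_n n a b \<simeq>\<^sub>Q P_n n (1 - b) a"
  by (rule P_n_Q_equivI[OF second_relator_rotate])

lemma P_n_Q_equiv_rotate_twice: "P_n n a b \<simeq>\<^sub>Q P_n n (1 - a) (1 - b)"
  using Q_equiv_trans[OF P_n_Q_equiv_rotate P_n_Q_equiv_rotate] by simp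

lemma P_n_Q_equiv_rotate_thrice: "P_n n a b \<simeq>\<^sub>Q P_n n b (1 - a)"
  using Q_equiv_trans[OF P_n_Q_equiv_rotate_twice P_n_Q_equiv_rotate] by simp

lemma P_n_one_fst: "P_n n 1 b = P_std n"
proof -
  have "gx b + gx (1 - b) = gx 1"
    by (simp add: gx_add[symmetric])
  then have "second_relator 1 b = gx 1 + gy 1 + gx 1 - gy 1"
    by (simp add: second_relator_def add.assoc)
  also have "\<dots> = abs_fg (gpow X 1 @ gpow Y 1 @ gpow X 1 @ gpow Y (-1))"
    unfolding abs_fg_append gx_def[symmetric] gy_def[symmetric] gy_minus
    by (simp only: group_add_normalize)
  finally show ?thesis
    by (simp add: P_n_eq P_std_def power_relator_def abs_fg_second_relator_word
        flip: abs_fg_eq_iff)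
qed

section \<open>Normalising the parameters\<close>

definition one_based_mod :: "nat \<Rightarrow> int \<Rightarrow> int" where
  "one_based_mod n x = (x - 1) mod int n + 1"

lemma one_based_mod_decomp: "x = one_based_mod n x + ((x - 1) div int n) * int n"
  by (simp add: one_based_mod_def)

lemma P_n_Q_equiv_one_based_mod:
  "P_n n a b \<simeq>\<^sub>Q P_n n (one_based_mod n a) (one_based_mod n b)"
proof (rule P_n_Q_equivI[where w = 0])
  have "nc_cong_n n (second_relator (k + m * int n) b) (second_relator k b)" for k m b
    by (rule nc_cong_periodic[where f = "\<lambda>a. second_relator a b"]) (rule second_relator_shift_fst)
  moreover have "nc_cong_n n (second_relator a (k + m * int n)) (second_relator a k)" for k m a
    by (rule nc_cong_periodic[where f = "second_relator a"]) (rule second_relator_shift_snd)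
  ultimately have "nc_cong_n n (second_relator a b) (second_relator (one_based_mod n a) (one_based_mod n b))"
    by (metis nc_cong_sym nc_cong_trans one_based_mod_decomp)
  then show "nc_cong_n n (0 + second_relator a b - 0) (second_relator (one_based_mod n a) (one_based_mod n b))"
    by simp
qed

lemma one_based_mod_ge_1: "0 < n \<Longrightarrow> 1 \<le> one_based_mod n x"
  by (simp add: one_based_mod_def)

lemma one_based_mod_add_one_minus: "0 < n \<Longrightarrow> one_based_mod n x + one_based_mod n (1 - x) = int n + 1"
  by (simp add: one_based_mod_def minus_mod_int_eq)

lemma one_based_mod_le_half:
  assumes "0 < n"
  shows "one_based_mod n x \<le> \<lceil>real n / 2\<rceil> \<or> one_based_mod n (1 - x) \<le> \<lceil>real n / 2\<rceil>"
proof -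
  have "real n \<le> 2 * of_int \<lceil>real n / 2\<rceil>"
    using le_of_int_ceiling[of "real n / 2"] by linarith
  then have "int n \<le> 2 * \<lceil>real n / 2\<rceil>"
    by linarith
  then show ?thesis
    using one_based_mod_add_one_minus[OF assms, of x] by linarith
qed

lemma P_n_Q_equiv_small:
  assumes "0 < n"
  obtains a' b' where "1 \<le> a'" "a' \<le> \<lceil>real n / 2\<rceil>" "1 \<le> b'" "b' \<le> \<lceil>real n / 2\<rceil>"
    and "P_n n a b \<simeq>\<^sub>Q P_n n a' b'"
proof -
  let ?m = "one_based_mod n" and ?c = "\<lceil>real n / 2\<rceil>"
  have "\<exists>a'' b''. P_n n a b \<simeq>\<^sub>Q P_n n a'' b'' \<and> ?m a'' \<le> ?c \<and> ?m b'' \<le> ?c"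
    using one_based_mod_le_half[OF assms, of a] one_based_mod_le_half[OF assms, of b]
      Q_equiv_refl P_n_Q_equiv_rotate P_n_Q_equiv_rotate_twice P_n_Q_equiv_rotate_thrice
    by blast
  then obtain a'' b'' where "P_n n a b \<simeq>\<^sub>Q P_n n a'' b''" "?m a'' \<le> ?c" "?m b'' \<le> ?c"
    by blast
  then show ?thesis
    using that one_based_mod_ge_1[OF assms] Q_equiv_trans[OF _ P_n_Q_equiv_one_based_mod]
    by meson
qed

theorem corollary3p6:
  fixes n :: nat and n1 m1 :: int
  assumes "n \<ge> 2" and "n1 \<noteq> 0" and "m1 \<noteq> 0"
  shows "(\<exists>n1' m1' :: int. 1 \<le> n1' \<and> n1' \<le> \<lceil>real n / 2\<rceil> \<and>
                          1 \<le> m1' \<and> m1' \<le> \<lceil>real n / 2\<rceil> \<and>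
                          P_n n n1 m1 \<simeq>\<^sub>Q P_n n n1' m1')
       \<and> ((n1 = 1 \<or> m1 = 1) \<longrightarrow> P_n n n1 m1 \<simeq>\<^sub>Q P_std n)"
proof -
  from assms(1) have "0 < n"
    by simp
  then obtain n1' m1' where "1 \<le> n1'" "n1' \<le> \<lceil>real n / 2\<rceil>" "1 \<le> m1'" "m1' \<le> \<lceil>real n / 2\<rceil>"
    and "P_n n n1 m1 \<simeq>\<^sub>Q P_n n n1' m1'"
    by (rule P_n_Q_equiv_small)
  moreover have "P_n n n1 1 \<simeq>\<^sub>Q P_std n"
    using P_n_Q_equiv_rotate_thrice[of n n1 1] by (simp add: P_n_one_fst)
  ultimately show ?thesis
    using P_n_one_fst Q_equiv_refl by auto
qed

end
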